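(* For an integer $q\ge 3$, let $\mathbf{mGT}_q$ be the subgroup of the group of permutations of the set $\mathbb{Z}/q\mathbb{Z}$ generated by (i) the multiplication maps $a\mapsto da$ for all $d\in(\mathbb{Z}/q\mathbb{Z})^*$, and (ii) the involution $\theta_q: a\mapsto 1-a$. For integers $p,q\ge 3$ with $p$ dividing $q$, let $t_{q,p}:\mathbb{Z}/q\mathbb{Z}\to\mathbb{Z}/p\mathbb{Z}$, $a \bmod q\mapsto a\bmod p$, be the reduction homomorphism. Then for every such $p\mid q$ and every $g\in\mathbf{mGT}_q$ there is a unique permutation $u_{q,p}(g)$ of $\mathbb{Z}/p\mathbb{Z}$ with $t_{q,p}\circ g=u_{q,p}(g)\circ t_{q,p}$; it lies in $\mathbf{mGT}_p$, and $g\mapsto u_{q,p}(g)$ is a group homomorphism $u_{q,p}:\mathbf{mGT}_q\to\mathbf{mGT}_p$. Moreover, whenever $p$ divides $q$ and $r$, and $q$ and $r$ divide $s$ (all $\ge 3$), one has $u_{q,p}\circ u_{s,q}=u_{r,p}\circ u_{s,r}=u_{s,p}$.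
   Context: $(\mathbb{Z}/q\mathbb{Z})^*$ denotes the multiplicative group of residue classes $d\bmod q$ with $\gcd(d,q)=1$. *)

theory Defs
  imports "HOL-Algebra.Algebra" "HOL-Combinatorics.Permutations"
begin

text \<open>Z/qZ is modelled by the representatives {..<q} (natural numbers).
 A permutation of Z/qZ is a function nat => nat permuting {..<q} (identity outside).\<close>

definition perm_grp :: "nat \<Rightarrow> (nat \<Rightarrow> nat) monoid" where
  "perm_grp q = \<lparr> carrier = {f. f permutes {..<q}}, monoid.mult = (\<circ>), one = id \<rparr>"

definition mult_map :: "nat \<Rightarrow> nat \<Rightarrow> nat \<Rightarrow> nat" where
  "mult_map q d = (\<lambda>a. if a < q then (d * a) mod q else a)"

definition theta :: "nat \<Rightarrow> nat \<Rightarrow> nat" where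
  "theta q = (\<lambda>a. if a < q then (q + 1 - a) mod q else a)"

definition mGT_gens :: "nat \<Rightarrow> (nat \<Rightarrow> nat) set" where
  "mGT_gens q = {mult_map q d | d. d < q \<and> coprime d q} \<union> {theta q}"

definition mGT :: "nat \<Rightarrow> (nat \<Rightarrow> nat) set" where
  "mGT q = generate (perm_grp q) (mGT_gens q)"

definition mGT_grp :: "nat \<Rightarrow> (nat \<Rightarrow> nat) monoid" where
  "mGT_grp q = (perm_grp q) \<lparr> carrier := mGT q \<rparr>"

definition red :: "nat \<Rightarrow> nat \<Rightarrow> nat" where
  "red p a = a mod p"

definition induced :: "nat \<Rightarrow> nat \<Rightarrow> (nat \<Rightarrow> nat) \<Rightarrow> (nat \<Rightarrow> nat)" where
  "induced q p g = (THE u. u permutes {..<p} \<and> (\<forall>a<q. red p (g a) = u (red p a)))"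

end

theory Submission
  imports Defs "HOL-Number_Theory.Number_Theory"
begin

text \<open>Reduction mod p intertwines each generator of mGT_q with a generator of mGT_p:
  d a mod q goes to (d mod p)(a mod p), and 1 - a to 1 - (a mod p).  Being intertwined in this
  way is preserved by composition and inversion, so every element g of mGT_q descends to some
  u in mGT_p with t_{q,p} o g = u o t_{q,p}; since t_{q,p} is onto, u is unique.  Uniqueness
  then yields multiplicativity of u_{q,p} and the transitivity u_{q,p} o u_{s,q} = u_{s,p},
  because both sides of each identity satisfy the defining intertwining relation.\<close>

lemma theta_less: "a < q \<Longrightarrow> theta q a < q"
  by (simp add: theta_def)

lemma int_theta: "a < q \<Longrightarrow> int (theta q a) = (1 - int a) mod int q"
proof -
  assume "a < q"
  then have "theta q a = (q + 1 - a) mod q" "int (q + 1 - a) = (1 - int a) + int q"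
    by (simp_all add: theta_def)
  then show ?thesis by (metis of_nat_mod mod_add_self2)
qed

lemma theta_theta [simp]: "theta q (theta q a) = a"
proof (cases "a < q")
  case True
  have "int (theta q (theta q a)) = (1 - (1 - int a) mod int q) mod int q"
    using True by (simp add: int_theta theta_less)
  also have "\<dots> = int a"
    using True by (simp add: mod_diff_right_eq)
  finally show ?thesis by simp
qed (simp add: theta_def)

lemma theta_permutes: "theta q permutes {..<q}"
  unfolding permutes_def
proof (intro conjI allI impI)
  fix x assume "x \<notin> {..<q}"
  then show "theta q x = x" by (simp add: theta_def)
next
  fix y show "\<exists>!x. theta q x = y"
    by (rule ex1I[of _ "theta q y"]) (simp, metis theta_theta)
qed

lemma red_theta:
  assumes "p dvd q" "a < q"
  shows "red p (theta q a) = theta p (red p a)"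
proof -
  have "0 < p" using dvd_pos_nat[of q p] assms by simp
  have "int (red p (theta q a)) = (1 - int a) mod int q mod int p"
    using assms by (simp add: red_def of_nat_mod int_theta)
  also have "\<dots> = (1 - int (a mod p)) mod int p"
    using assms by (simp add: mod_mod_cancel mod_diff_right_eq of_nat_mod)
  also have "\<dots> = int (theta p (red p a))"
    using \<open>0 < p\<close> by (simp add: red_def int_theta)
  finally show ?thesis by simp
qed

lemma red_mult_map:
  assumes "p dvd q" "a < q"
  shows "red p (mult_map q d a) = mult_map p (d mod p) (red p a)"
proof -
  have "0 < p" using dvd_pos_nat[of q p] assms by simp
  then show ?thesis
    using assms by (simp add: mult_map_def red_def mod_mod_cancel mod_mult_eq)
qed

lemma mult_map_permutes:
  assumes "coprime d q" shows "mult_map q d permutes {..<q}"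
proof (rule bij_imp_permutes)
  have "inj_on (mult_map q d) {..<q}"
  proof (rule inj_onI)
    fix a b assume "a \<in> {..<q}" "b \<in> {..<q}" "mult_map q d a = mult_map q d b"
    then have "[d * a = d * b] (mod q)" "a < q" "b < q" by (auto simp: mult_map_def cong_def)
    then show "a = b" using assms by (metis cong_mult_lcancel_nat cong_less_modulus_unique_nat)
  qed
  moreover have "mult_map q d ` {..<q} \<subseteq> {..<q}" by (auto simp: mult_map_def)
  ultimately show "bij_betw (mult_map q d) {..<q} {..<q}"
    by (simp add: bij_betw_def endo_inj_surj)
qed (simp add: mult_map_def)

definition reduces_to :: "nat \<Rightarrow> nat \<Rightarrow> (nat \<Rightarrow> nat) \<Rightarrow> (nat \<Rightarrow> nat) \<Rightarrow> bool" where
  "reduces_to q p g u \<longleftrightarrow> (\<forall>a<q. red p (g a) = u (red p a))"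

lemma reduces_to_id: "reduces_to q p id id"
  by (simp add: reduces_to_def)

lemma reduces_to_comp:
  assumes "g' permutes {..<q}" "reduces_to q p g u" "reduces_to q p g' u'"
  shows "reduces_to q p (g \<circ> g') (u \<circ> u')"
  using assms permutes_in_image[OF assms(1)] by (simp add: reduces_to_def)

lemma reduces_to_inv:
  assumes g: "g permutes {..<q}" and u: "u permutes {..<p}" and "reduces_to q p g u"
  shows "reduces_to q p (Hilbert_Choice.inv g) (Hilbert_Choice.inv u)"
  unfolding reduces_to_def
proof (intro allI impI)
  fix a assume "a < q"
  then have "Hilbert_Choice.inv g a < q" using permutes_in_image[OF permutes_inv[OF g]] by simp
  then have "red p a = u (red p (Hilbert_Choice.inv g a))"
    using \<open>reduces_to q p g u\<close> permutes_inverses(1)[OF g] by (metis reduces_to_def)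
  then show "red p (Hilbert_Choice.inv g a) = Hilbert_Choice.inv u (red p a)"
    using permutes_inverses(2)[OF u] by metis
qed

lemma reduces_to_trans:
  assumes "p dvd q" "0 < q" "reduces_to s q g v" "reduces_to q p v w"
  shows "reduces_to s p g w"
  unfolding reduces_to_def
proof (intro allI impI)
  fix a assume "a < s"
  have "red p (g a) = red p (red q (g a))"
    using assms(1) by (simp add: red_def mod_mod_cancel)
  also have "\<dots> = red p (v (red q a))"
    using assms(3) \<open>a < s\<close> by (simp add: reduces_to_def)
  also have "\<dots> = w (red p (red q a))"
    using assms(2,4) by (simp add: reduces_to_def red_def)
  also have "\<dots> = w (red p a)"
    using assms(1) by (simp add: red_def mod_mod_cancel)
  finally show "red p (g a) = w (red p a)" .
qed

lemma reduces_to_unique: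
  assumes "p \<le> q" "u permutes {..<p}" "v permutes {..<p}"
    and "reduces_to q p g u" "reduces_to q p g v"
  shows "u = v"
proof
  fix x
  show "u x = v x"
  proof (cases "x < p")
    case True
    then show ?thesis
      using assms(1,4,5) by (metis reduces_to_def red_def mod_less order_less_le_trans)
  next
    case False
    then show ?thesis using assms(2,3) by (simp add: permutes_def)
  qed
qed

lemma induced_eqI:
  assumes "p \<le> q" "u permutes {..<p}" "reduces_to q p g u"
  shows "induced q p g = u"
  unfolding induced_def reduces_to_def[symmetric]
  using assms reduces_to_unique[OF assms(1)] by blast

lemma perm_grp_group: "group (perm_grp q)"
  by (rule groupI)
     (auto simp: perm_grp_def permutes_compose comp_assoc intro: permutes_inv permutes_inv_o(2))

lemma perm_grp_inv:
  assumes "f permutes {..<q}" shows "inv\<^bsub>perm_grp q\<^esub> f = Hilbert_Choice.inv f"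
  using group.inv_equality[OF perm_grp_group] assms permutes_inv permutes_inv_o(2)
  by (fastforce simp: perm_grp_def)

lemma mGT_gens_permutes: "h \<in> mGT_gens q \<Longrightarrow> h permutes {..<q}"
  by (auto simp: mGT_gens_def mult_map_permutes theta_permutes)

lemma mGT_permutes:
  assumes "g \<in> mGT q" shows "g permutes {..<q}"
proof -
  have "mGT_gens q \<subseteq> carrier (perm_grp q)"
    using mGT_gens_permutes by (auto simp: perm_grp_def)
  then have "g \<in> carrier (perm_grp q)"
    using group.generate_in_carrier[OF perm_grp_group] assms unfolding mGT_def by blast
  then show ?thesis by (simp add: perm_grp_def)
qed

lemma mGT_gens_reduce:
  assumes "p dvd q" "0 < p" "h \<in> mGT_gens q"
  shows "\<exists>u \<in> mGT_gens p. reduces_to q p h u"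
proof (cases "h = theta q")
  case True
  then have "reduces_to q p h (theta p)"
    using assms(1) by (simp add: reduces_to_def red_theta)
  then show ?thesis by (auto simp: mGT_gens_def)
next
  case False
  then obtain d where h: "h = mult_map q d" and "coprime d q"
    using assms(3) by (auto simp: mGT_gens_def)
  then have "coprime (d mod p) p"
    using coprime_divisors[OF dvd_refl assms(1)] assms(2) by simp
  then have "mult_map p (d mod p) \<in> mGT_gens p"
    using assms(2) by (auto simp: mGT_gens_def)
  moreover have "reduces_to q p h (mult_map p (d mod p))"
    using assms(1) by (simp add: h reduces_to_def red_mult_map)
  ultimately show ?thesis by blast
qed

lemma mGT_reduce:
  assumes "p dvd q" "0 < p" "g \<in> mGT q"
  shows "\<exists>u \<in> mGT p. reduces_to q p g u"
  using assms(3) unfolding mGT_def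
proof (induction rule: generate.induct)
  case one
  have "id \<in> generate (perm_grp p) (mGT_gens p)" "\<one>\<^bsub>perm_grp q\<^esub> = id"
    using generate.one[of "perm_grp p"] by (simp_all add: perm_grp_def)
  then show ?case using reduces_to_id by metis
next
  case (incl h)
  then show ?case
    using mGT_gens_reduce[OF assms(1,2)] generate.incl[of _ "mGT_gens p"] by blast
next
  case (inv h)
  then obtain u where u: "u \<in> mGT_gens p" "reduces_to q p h u"
    using mGT_gens_reduce[OF assms(1,2)] by blast
  have h_perm: "h permutes {..<q}" and u_perm: "u permutes {..<p}"
    using inv u(1) mGT_gens_permutes by blast+
  have "reduces_to q p (Hilbert_Choice.inv h) (Hilbert_Choice.inv u)"
    using reduces_to_inv[OF h_perm u_perm u(2)] .
  moreover have "Hilbert_Choice.inv u \<in> generate (perm_grp p) (mGT_gens p)"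
    using generate.inv[OF u(1), of "perm_grp p"] by (simp add: perm_grp_inv[OF u_perm])
  ultimately show ?case by (auto simp: perm_grp_inv[OF h_perm])
next
  case (eng h h')
  then obtain u u' where
    u: "u \<in> generate (perm_grp p) (mGT_gens p)" "reduces_to q p h u" and
    u': "u' \<in> generate (perm_grp p) (mGT_gens p)" "reduces_to q p h' u'"
    by blast
  have "h' permutes {..<q}"
    using eng(2) mGT_permutes unfolding mGT_def by blast
  then have "reduces_to q p (h \<otimes>\<^bsub>perm_grp q\<^esub> h') (u \<otimes>\<^bsub>perm_grp p\<^esub> u')"
    using reduces_to_comp u(2) u'(2) by (simp add: perm_grp_def)
  moreover have "u \<otimes>\<^bsub>perm_grp p\<^esub> u' \<in> generate (perm_grp p) (mGT_gens p)"
    using u(1) u'(1) by (rule generate.eng)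
  ultimately show ?case by blast
qed

lemma induced_reduction:
  assumes "p dvd q" "0 < q" "g \<in> mGT q"
  shows "induced q p g \<in> mGT p" and "reduces_to q p g (induced q p g)"
proof -
  have "0 < p" "p \<le> q" using assms(1,2) by (auto intro: dvd_imp_le dvd_pos_nat)
  then obtain u where "u \<in> mGT p" "reduces_to q p g u"
    using mGT_reduce assms by blast
  moreover have "induced q p g = u"
    using induced_eqI \<open>p \<le> q\<close> mGT_permutes calculation by blast
  ultimately show "induced q p g \<in> mGT p" "reduces_to q p g (induced q p g)" by simp_all
qed

lemma induced_comp:
  assumes "p dvd q" "0 < q" "g \<in> mGT q" "g' \<in> mGT q"
  shows "induced q p (g \<circ> g') = induced q p g \<circ> induced q p g'"
proof (rule induced_eqI)
  show "p \<le> q" using assms(1,2) by (rule dvd_imp_le)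
  have "induced q p g permutes {..<p}" "induced q p g' permutes {..<p}"
    using mGT_permutes induced_reduction(1) assms by blast+
  then show "induced q p g \<circ> induced q p g' permutes {..<p}"
    by (rule permutes_compose[rotated])
  show "reduces_to q p (g \<circ> g') (induced q p g \<circ> induced q p g')"
    using reduces_to_comp[OF mGT_permutes[OF assms(4)]] induced_reduction(2) assms by blast
qed

lemma induced_hom:
  assumes "p dvd q" "0 < q"
  shows "induced q p \<in> hom (mGT_grp q) (mGT_grp p)"
  using assms induced_reduction(1) induced_comp
  by (intro homI) (simp_all add: mGT_grp_def perm_grp_def)

lemma induced_induced:
  assumes "p dvd q" "q dvd s" "0 < s" "g \<in> mGT s"
  shows "induced q p (induced s q g) = induced s p g"
proof -
  have "0 < q" using assms(3,2) by (rule dvd_pos_nat)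
  have "induced s q g \<in> mGT q" "reduces_to s q g (induced s q g)"
    using induced_reduction assms(2-4) by blast+
  then have "induced q p (induced s q g) \<in> mGT p"
    and "reduces_to s p g (induced q p (induced s q g))"
    using induced_reduction[OF assms(1) \<open>0 < q\<close>] reduces_to_trans[OF assms(1) \<open>0 < q\<close>]
    by blast+
  moreover have "p \<le> s" using assms(1-3) by (metis dvd_trans dvd_imp_le)
  ultimately show ?thesis
    using induced_eqI mGT_permutes by (metis (no_types))
qed

theorem proposition6p3:
  shows "(\<forall>p q g. 3 \<le> p \<and> 3 \<le> q \<and> p dvd q \<and> g \<in> mGT q \<longrightarrow>
            (\<exists>!u. u permutes {..<p} \<and> (\<forall>a<q. red p (g a) = u (red p a)))
            \<and> induced q p g \<in> mGT p)
       \<and> (\<forall>p q. 3 \<le> p \<and> 3 \<le> q \<and> p dvd q \<longrightarrow>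
            induced q p \<in> hom (mGT_grp q) (mGT_grp p))
       \<and> (\<forall>p q r s. 3 \<le> p \<and> 3 \<le> q \<and> 3 \<le> r \<and> 3 \<le> s \<and> p dvd q \<and> p dvd r
               \<and> q dvd s \<and> r dvd s \<longrightarrow>
            (\<forall>g \<in> mGT s. induced q p (induced s q g) = induced s p g
                        \<and> induced r p (induced s r g) = induced s p g))"
proof (intro conjI allI impI ballI)
  fix p q g assume "3 \<le> p \<and> 3 \<le> q \<and> p dvd q \<and> g \<in> mGT q"
  then have "p dvd q" "0 < q" "p \<le> q" "g \<in> mGT q" by (auto intro: dvd_imp_le)
  note induced = induced_reduction[OF this(1,2,4)]
  then show "\<exists>!u. u permutes {..<p} \<and> (\<forall>a<q. red p (g a) = u (red p a))"
    using mGT_permutes reduces_to_unique[OF \<open>p \<le> q\<close>] unfolding reduces_to_def by blast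
  show "induced q p g \<in> mGT p" using induced(1) .
qed (auto intro: induced_hom induced_induced)

end
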